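(* Let $n\geq 3$ and let $P=[p_{ij}]$ be the $n\times n$ symmetric matrix with $p_{ii}=x_i\geq 0$ ($1\le i\le n$), $p_{i,i+2}=p_{i+2,i}=y_i\geq 0$ ($1\le i\le n-2$), and all other entries equal to $0$. Then $P$ is infinitely divisible if and only if $P$ is positive semidefinite and neither of the sequences $(y_2,y_4,y_6,\ldots)$ and $(y_1,y_3,y_5,\ldots)$ (indices at most $n-2$) has two consecutive positive entries. In particular, for $n=3$ and $n=4$, $P$ is infinitely divisible if and only if $P$ is positive semidefinite.
   Context: For a nonnegative matrix $A=[a_{ij}]$ and $r>0$, $A^{\circ r}=[a_{ij}^r]$. A nonnegative symmetric matrix $A$ is infinitely divisible if $A^{\circ r}$ is positive semidefinite for every $r>0$. *)

theory Defs
  imports Complex_Main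
begin

text \<open>Real n x n matrices are represented as functions nat => nat => real,
  indexed by 1..n (entries outside this range are irrelevant).\<close>

definition psd :: "nat \<Rightarrow> (nat \<Rightarrow> nat \<Rightarrow> real) \<Rightarrow> bool" where
  "psd n A \<longleftrightarrow> (\<forall>i\<in>{1..n}. \<forall>j\<in>{1..n}. A i j = A j i) \<and>
     (\<forall>v :: nat \<Rightarrow> real. (\<Sum>i=1..n. \<Sum>j=1..n. v i * A i j * v j) \<ge> 0)"

definition hadamard_pow :: "(nat \<Rightarrow> nat \<Rightarrow> real) \<Rightarrow> real \<Rightarrow> (nat \<Rightarrow> nat \<Rightarrow> real)" where
  "hadamard_pow A r = (\<lambda>i j. A i j powr r)"

definition infinitely_divisible :: "nat \<Rightarrow> (nat \<Rightarrow> nat \<Rightarrow> real) \<Rightarrow> bool" where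
  "infinitely_divisible n A \<longleftrightarrow>
     (\<forall>i\<in>{1..n}. \<forall>j\<in>{1..n}. A i j \<ge> 0 \<and> A i j = A j i) \<and>
     (\<forall>r>0. psd n (hadamard_pow A r))"

definition pmat :: "(nat \<Rightarrow> real) \<Rightarrow> (nat \<Rightarrow> real) \<Rightarrow> nat \<Rightarrow> nat \<Rightarrow> real" where
  "pmat x y i j = (if i = j then x i else if j = i + 2 then y i else if i = j + 2 then y j else 0)"

end

theory Submission
  imports Defs
begin

text \<open>If \<open>y\<^sub>i\<close> and \<open>y\<^sub>i\<^sub>+\<^sub>2\<close> are never both positive, the index pairs \<open>{i, i+2}\<close> with \<open>y\<^sub>i > 0\<close> are
  pairwise disjoint, so the form is a sum of \<open>2 \<times> 2\<close> forms plus a nonnegative diagonal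
  remainder. It is then positive semidefinite iff \<open>y\<^sub>i\<^sup>2 \<le> x\<^sub>i x\<^sub>i\<^sub>+\<^sub>2\<close> for all \<open>i\<close>, and this
  condition, like the zero pattern, survives Hadamard powers.
  Conversely, if \<open>y\<^sub>i\<close> and \<open>y\<^sub>i\<^sub>+\<^sub>2\<close> are both positive, the test vector with entries
  \<open>1, -1, 1\<close> at \<open>i, i+2, i+4\<close> gives the value \<open>x\<^sub>i\<^sup>r + x\<^sub>i\<^sub>+\<^sub>2\<^sup>r + x\<^sub>i\<^sub>+\<^sub>4\<^sup>r - 2y\<^sub>i\<^sup>r - 2y\<^sub>i\<^sub>+\<^sub>2\<^sup>r\<close>
  on the \<open>r\<close>-th Hadamard power, which tends to \<open>3 - 4\<close> as \<open>r \<rightarrow> 0\<close>.\<close>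

lemma psd_cong:
  assumes "\<And>i j. i \<in> {1..n} \<Longrightarrow> j \<in> {1..n} \<Longrightarrow> A i j = B i j"
  shows "psd n A \<longleftrightarrow> psd n B"
proof -
  have "(\<Sum>i=1..n. \<Sum>j=1..n. v i * A i j * v j) = (\<Sum>i=1..n. \<Sum>j=1..n. v i * B i j * v j)" for v
    using assms by (intro sum.cong refl) auto
  with assms show ?thesis
    unfolding psd_def by simp
qed

lemma infinitely_divisible_imp_psd:
  assumes "infinitely_divisible n A"
  shows "psd n A"
proof -
  have "psd n (hadamard_pow A 1)"
    using assms unfolding infinitely_divisible_def by simp
  moreover have "hadamard_pow A 1 i j = A i j" if "i \<in> {1..n}" "j \<in> {1..n}" for i j
    using assms that unfolding infinitely_divisible_def hadamard_pow_def by (simp add: powr_one)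
  ultimately show ?thesis
    using psd_cong by blast
qed

lemma binary_form_nonneg_iff:
  fixes X Y Z :: real
  shows "(\<forall>a b. 0 \<le> X * a\<^sup>2 + Z * b\<^sup>2 + 2 * Y * a * b) \<longleftrightarrow> 0 \<le> X \<and> 0 \<le> Z \<and> Y\<^sup>2 \<le> X * Z"
proof
  assume nonneg: "\<forall>a b. 0 \<le> X * a\<^sup>2 + Z * b\<^sup>2 + 2 * Y * a * b"
  have X: "0 \<le> X" and Z: "0 \<le> Z"
    using nonneg[rule_format, of 1 0] nonneg[rule_format, of 0 1] by simp_all
  have "Y\<^sup>2 \<le> X * Z"
  proof (cases "X = 0")
    case True
    have "Y = 0"
    proof (rule ccontr)
      assume "Y \<noteq> 0"
      have "0 \<le> X * (-(Z + 1) / (2 * Y))\<^sup>2 + Z * 1\<^sup>2 + 2 * Y * (-(Z + 1) / (2 * Y)) * 1"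
        using nonneg by blast
      also have "\<dots> = -1"
        using True \<open>Y \<noteq> 0\<close> by (simp add: field_simps)
      finally show False by simp
    qed
    then show ?thesis using True by simp
  next
    case False
    have "0 \<le> X * (-Y)\<^sup>2 + Z * X\<^sup>2 + 2 * Y * (-Y) * X"
      using nonneg by blast
    also have "\<dots> = X * (X * Z - Y\<^sup>2)"
      by (simp add: algebra_simps power2_eq_square)
    finally show ?thesis
      using X False by (simp add: zero_le_mult_iff)
  qed
  with X Z show "0 \<le> X \<and> 0 \<le> Z \<and> Y\<^sup>2 \<le> X * Z" by blast
next
  assume "0 \<le> X \<and> 0 \<le> Z \<and> Y\<^sup>2 \<le> X * Z"
  then have X: "0 \<le> X" and Z: "0 \<le> Z" and det: "Y\<^sup>2 \<le> X * Z" by auto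
  show "\<forall>a b. 0 \<le> X * a\<^sup>2 + Z * b\<^sup>2 + 2 * Y * a * b"
  proof (intro allI)
    fix a b :: real
    show "0 \<le> X * a\<^sup>2 + Z * b\<^sup>2 + 2 * Y * a * b"
    proof (cases "X = 0")
      case True
      then show ?thesis using det Z by simp
    next
      case False
      have "X * (X * a\<^sup>2 + Z * b\<^sup>2 + 2 * Y * a * b) = (X * a + Y * b)\<^sup>2 + (X * Z - Y\<^sup>2) * b\<^sup>2"
        by (simp add: algebra_simps power2_eq_square)
      also have "\<dots> \<ge> 0"
        using det by simp
      finally show ?thesis
        using X False by (simp add: zero_le_mult_iff)
    qed
  qed
qed

lemma powr_sq_le_powr_mult:
  fixes a b c r :: real
  assumes "0 \<le> a" "0 \<le> b" "0 \<le> c" "0 < r" "b\<^sup>2 \<le> a * c"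
  shows "(b powr r)\<^sup>2 \<le> a powr r * c powr r"
proof -
  have "(b powr r)\<^sup>2 = (b\<^sup>2) powr r"
    using assms by (simp add: power2_eq_square powr_mult)
  also have "\<dots> \<le> (a * c) powr r"
    using assms by (intro powr_mono2) auto
  also have "\<dots> = a powr r * c powr r"
    using assms by (simp add: powr_mult)
  finally show ?thesis .
qed

lemma ex_powr_sum_three_lt_four:
  fixes a b c d e :: real
  assumes "0 < a" "0 < b" "0 < c" "0 < d" "0 < e"
  shows "\<exists>r>0. a powr r + b powr r + c powr r < 2 * d powr r + 2 * e powr r"
proof -
  let ?g = "\<lambda>r. a powr r + b powr r + c powr r - 2 * d powr r - 2 * e powr r"
  have "(?g \<longlongrightarrow> a powr 0 + b powr 0 + c powr 0 - 2 * d powr 0 - 2 * e powr 0) (at_right 0)"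
    using assms by (intro tendsto_intros) auto
  then have "(?g \<longlongrightarrow> -1) (at_right 0)"
    using assms by simp
  then have "\<forall>\<^sub>F r in at_right 0. ?g r < 0"
    by (rule order_tendstoD) simp
  moreover have "\<forall>\<^sub>F r in at_right (0::real). 0 < r"
    by (simp add: eventually_at_right_less)
  ultimately have "\<forall>\<^sub>F r in at_right 0. 0 < r \<and> ?g r < 0"
    by (simp add: eventually_conj_iff)
  then obtain r where "0 < r" "?g r < 0"
    using eventually_happens'[OF trivial_limit_at_right_real] by blast
  then show ?thesis
    by auto
qed

definition pmat_form :: "nat \<Rightarrow> (nat \<Rightarrow> real) \<Rightarrow> (nat \<Rightarrow> real) \<Rightarrow> (nat \<Rightarrow> real) \<Rightarrow> real" where
  "pmat_form n x y v = (\<Sum>j=1..n. x j * (v j)\<^sup>2) + 2 * (\<Sum>i=1..n-2. y i * v i * v (i + 2))"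

lemma sum_if_Suc_Suc_le:
  fixes g :: "nat \<Rightarrow> 'a::comm_monoid_add"
  shows "(\<Sum>i=1..n. if Suc (Suc i) \<le> n then g i else 0) = (\<Sum>i=1..n-2. g i)"
proof -
  have "{1..n-2} = {i\<in>{1..n}. Suc (Suc i) \<le> n}" by auto
  then show ?thesis
    using sum.inter_filter[of "{1..n}" g "\<lambda>i. Suc (Suc i) \<le> n"] by simp
qed

lemma quadratic_form_pmat:
  "(\<Sum>i=1..n. \<Sum>j=1..n. v i * pmat x y i j * v j) = pmat_form n x y v"
proof -
  have split: "v i * pmat x y i j * v j =
      (if j = i then x i * (v i)\<^sup>2 else 0) + (if j = i + 2 then y i * v i * v j else 0)
      + (if i = j + 2 then y j * v j * v i else 0)" for i j
    by (auto simp: pmat_def power2_eq_square)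
  have diag: "(\<Sum>i=1..n. \<Sum>j=1..n. if j = i then x i * (v i)\<^sup>2 else 0) = (\<Sum>j=1..n. x j * (v j)\<^sup>2)"
    by (simp add: sum.delta')
  have upper: "(\<Sum>i=1..n. \<Sum>j=1..n. if j = i + 2 then y i * v i * v j else 0)
      = (\<Sum>i=1..n-2. y i * v i * v (i + 2))"
    using sum_if_Suc_Suc_le[of n "\<lambda>i. y i * v i * v (Suc (Suc i))"] by (simp add: sum.delta')
  have lower: "(\<Sum>i=1..n. \<Sum>j=1..n. if i = j + 2 then y j * v j * v i else 0)
      = (\<Sum>i=1..n-2. y i * v i * v (i + 2))"
    using sum_if_Suc_Suc_le[of n "\<lambda>i. y i * v i * v (Suc (Suc i))"]
    by (subst sum.swap) (simp add: sum.delta mult_ac)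
  show ?thesis
    unfolding split sum.distrib diag upper lower pmat_form_def by simp
qed

lemma psd_pmat_iff: "psd n (pmat x y) \<longleftrightarrow> (\<forall>v. 0 \<le> pmat_form n x y v)"
proof -
  have "pmat x y i j = pmat x y j i" for i j
    by (auto simp: pmat_def)
  then show ?thesis
    unfolding psd_def quadratic_form_pmat by auto
qed

lemma hadamard_pow_pmat:
  "hadamard_pow (pmat x y) r = pmat (\<lambda>i. x i powr r) (\<lambda>i. y i powr r)"
  by (auto simp: hadamard_pow_def pmat_def fun_eq_iff)

lemma pmat_form_two_point:
  assumes "i \<in> {1..n-2}"
  shows "pmat_form n x y (\<lambda>k. if k = i then a else if k = i + 2 then b else 0)
    = x i * a\<^sup>2 + x (i + 2) * b\<^sup>2 + 2 * y i * a * b"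
proof -
  let ?v = "\<lambda>k. if k = i then a else if k = i + 2 then b else 0"
  have diag: "x k * (?v k)\<^sup>2 = (if k = i then x i * a\<^sup>2 else 0) + (if k = i + 2 then x (i + 2) * b\<^sup>2 else 0)" for k
    by auto
  have off: "y k * ?v k * ?v (k + 2) = (if k = i then y i * a * b else 0)" for k
    by auto
  have "i \<in> {1..n}" "i + 2 \<in> {1..n}"
    using assms by auto
  then show ?thesis
    unfolding pmat_form_def diag off sum.distrib using assms by (simp add: sum.delta)
qed

lemma pmat_form_three_point:
  assumes "1 \<le> i" "i + 4 \<le> n"
  shows "pmat_form n x y (\<lambda>k. if k = i then 1 else if k = i + 2 then -1 else if k = i + 4 then 1 else 0)
    = x i + x (i + 2) + x (i + 4) - 2 * y i - 2 * y (i + 2)"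
proof -
  let ?v = "\<lambda>k. if k = i then 1 else if k = i + 2 then -1 else if k = i + 4 then 1 else 0 :: real"
  have diag: "x k * (?v k)\<^sup>2 = (if k = i then x i else 0) + (if k = i + 2 then x (i + 2) else 0)
      + (if k = i + 4 then x (i + 4) else 0)" for k
    by auto
  have off: "y k * ?v k * ?v (k + 2) = (if k = i then - y i else 0) + (if k = i + 2 then - y (i + 2) else 0)" for k
    by auto
  have "i \<in> {1..n}" "i + 2 \<in> {1..n}" "i + 4 \<in> {1..n}" "i \<in> {1..n-2}" "i + 2 \<in> {1..n-2}"
    using assms by auto
  then show ?thesis
    unfolding pmat_form_def diag off sum.distrib by (simp add: sum.delta)
qed

lemma psd_pmat_imp_block_psd:
  assumes "psd n (pmat x y)" "i \<in> {1..n-2}"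
  shows "0 \<le> x i" "0 \<le> x (i + 2)" "(y i)\<^sup>2 \<le> x i * x (i + 2)"
proof -
  have "0 \<le> pmat_form n x y (\<lambda>k. if k = i then a else if k = i + 2 then b else 0)" for a b
    using assms(1) unfolding psd_pmat_iff ..
  then have "\<forall>a b. 0 \<le> x i * a\<^sup>2 + x (i + 2) * b\<^sup>2 + 2 * y i * a * b"
    unfolding pmat_form_two_point[OF assms(2)] by blast
  then show "0 \<le> x i" "0 \<le> x (i + 2)" "(y i)\<^sup>2 \<le> x i * x (i + 2)"
    unfolding binary_form_nonneg_iff by auto
qed

lemma pmat_form_nonneg:
  assumes x_nonneg: "\<forall>j\<in>{1..n}. 0 \<le> x j"
    and y_nonneg: "\<forall>i\<in>{1..n-2}. 0 \<le> y i"
    and block_psd: "\<forall>i\<in>{1..n-2}. (y i)\<^sup>2 \<le> x i * x (i + 2)"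
    and no_adjacent: "\<not> (\<exists>i. 1 \<le> i \<and> i + 2 \<le> n - 2 \<and> y i > 0 \<and> y (i + 2) > 0)"
  shows "0 \<le> pmat_form n x y v"
proof -
  define E where "E = {i\<in>{1..n-2}. y i > 0}"
  define f where "f j = x j * (v j)\<^sup>2" for j
  have "finite E" unfolding E_def by auto
  have off_diag: "(\<Sum>i=1..n-2. y i * v i * v (i + 2)) = (\<Sum>i\<in>E. y i * v i * v (i + 2))"
    by (rule sum.mono_neutral_right) (use y_nonneg in \<open>force simp: E_def\<close>)+
  have blocks: "- (f i + f (i + 2)) \<le> 2 * y i * v i * v (i + 2)" if "i \<in> E" for i
  proof -
    have "\<forall>a b. 0 \<le> x i * a\<^sup>2 + x (i + 2) * b\<^sup>2 + 2 * y i * a * b"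
      using that x_nonneg block_psd binary_form_nonneg_iff[of "x i" "x (i + 2)" "y i"]
      unfolding E_def by auto
    from this[rule_format, of "v i" "v (i + 2)"] show ?thesis
      unfolding f_def by linarith
  qed
  have disjoint: "E \<inter> (\<lambda>i. i + 2) ` E = {}"
  proof (rule ccontr)
    assume "E \<inter> (\<lambda>i. i + 2) ` E \<noteq> {}"
    then obtain k where "k \<in> E" "k + 2 \<in> E" by auto
    with no_adjacent show False
      unfolding E_def by auto
  qed
  have "(\<Sum>i\<in>E. f i + f (i + 2)) = (\<Sum>j\<in>E \<union> (\<lambda>i. i + 2) ` E. f j)"
    using sum.union_disjoint[OF \<open>finite E\<close> _ disjoint, of f] \<open>finite E\<close>
    by (simp add: sum.distrib sum.reindex inj_on_def)
  also have "\<dots> \<le> (\<Sum>j=1..n. f j)"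
    by (rule sum_mono2) (use x_nonneg in \<open>auto simp: E_def f_def\<close>)
  finally have "(\<Sum>i\<in>E. f i + f (i + 2)) \<le> (\<Sum>j=1..n. f j)" .
  moreover have "(\<Sum>i\<in>E. - (f i + f (i + 2))) \<le> (\<Sum>i\<in>E. 2 * y i * v i * v (i + 2))"
    using blocks by (rule sum_mono)
  moreover have "pmat_form n x y v = (\<Sum>j=1..n. f j) + (\<Sum>i\<in>E. 2 * y i * v i * v (i + 2))"
    unfolding pmat_form_def f_def off_diag by (simp add: sum_distrib_left mult.assoc)
  ultimately show ?thesis
    using sum_negf[of "\<lambda>i. f i + f (i + 2)" E] by linarith
qed

lemma psd_pmat_iff_blocks:
  assumes x_nonneg: "\<forall>i\<in>{1..n}. 0 \<le> x i"
    and y_nonneg: "\<forall>i\<in>{1..n-2}. 0 \<le> y i"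
    and no_adjacent: "\<not> (\<exists>i. 1 \<le> i \<and> i + 2 \<le> n - 2 \<and> y i > 0 \<and> y (i + 2) > 0)"
  shows "psd n (pmat x y) \<longleftrightarrow> (\<forall>i\<in>{1..n-2}. (y i)\<^sup>2 \<le> x i * x (i + 2))"
proof
  assume "psd n (pmat x y)"
  then show "\<forall>i\<in>{1..n-2}. (y i)\<^sup>2 \<le> x i * x (i + 2)"
    using psd_pmat_imp_block_psd(3) by blast
next
  assume "\<forall>i\<in>{1..n-2}. (y i)\<^sup>2 \<le> x i * x (i + 2)"
  then show "psd n (pmat x y)"
    unfolding psd_pmat_iff using pmat_form_nonneg[OF x_nonneg y_nonneg _ no_adjacent] by blast
qed

lemma infinitely_divisible_pmat_if_no_adjacent:
  assumes x_nonneg: "\<forall>i\<in>{1..n}. 0 \<le> x i"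
    and y_nonneg: "\<forall>i\<in>{1..n-2}. 0 \<le> y i"
    and psd: "psd n (pmat x y)"
    and no_adjacent: "\<not> (\<exists>i. 1 \<le> i \<and> i + 2 \<le> n - 2 \<and> y i > 0 \<and> y (i + 2) > 0)"
  shows "infinitely_divisible n (pmat x y)"
proof -
  have "psd n (pmat (\<lambda>i. x i powr r) (\<lambda>i. y i powr r))" if "0 < r" for r
  proof (subst psd_pmat_iff_blocks)
    show "\<forall>i\<in>{1..n-2}. (y i powr r)\<^sup>2 \<le> x i powr r * x (i + 2) powr r"
    proof
      fix i assume i: "i \<in> {1..n-2}"
      show "(y i powr r)\<^sup>2 \<le> x i powr r * x (i + 2) powr r"
        by (rule powr_sq_le_powr_mult)
          (use psd_pmat_imp_block_psd[OF psd i] y_nonneg i \<open>0 < r\<close> in auto)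
    qed
    show "\<not> (\<exists>i. 1 \<le> i \<and> i + 2 \<le> n - 2 \<and> 0 < y i powr r \<and> 0 < y (i + 2) powr r)"
    proof
      assume "\<exists>i. 1 \<le> i \<and> i + 2 \<le> n - 2 \<and> 0 < y i powr r \<and> 0 < y (i + 2) powr r"
      then obtain i where i: "1 \<le> i" "i + 2 \<le> n - 2" "0 < y i powr r" "0 < y (i + 2) powr r"
        by blast
      then have "0 \<le> y i" "0 \<le> y (i + 2)"
        using y_nonneg by auto
      with i have "0 < y i" "0 < y (i + 2)"
        by (auto simp: less_le)
      with no_adjacent i show False by blast
    qed
  qed simp_all
  moreover have "\<forall>i\<in>{1..n}. \<forall>j\<in>{1..n}. 0 \<le> pmat x y i j \<and> pmat x y i j = pmat x y j i"
    using x_nonneg y_nonneg by (auto simp: pmat_def)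
  ultimately show ?thesis
    unfolding infinitely_divisible_def hadamard_pow_pmat by blast
qed

lemma no_adjacent_if_infinitely_divisible_pmat:
  assumes id: "infinitely_divisible n (pmat x y)"
    and "1 \<le> i" "i + 2 \<le> n - 2"
  shows "\<not> (y i > 0 \<and> y (i + 2) > 0)"
proof
  assume y_pos: "y i > 0 \<and> y (i + 2) > 0"
  have psd: "psd n (pmat x y)"
    using id by (rule infinitely_divisible_imp_psd)
  have i: "i \<in> {1..n-2}" and i2: "i + 2 \<in> {1..n-2}" and "i + 4 \<le> n"
    using assms by auto
  have "0 \<le> x i" and det: "(y i)\<^sup>2 \<le> x i * x (i + 2)"
    using psd_pmat_imp_block_psd[OF psd i] by auto
  have "0 \<le> x (i + 2)" "0 \<le> x (i + 4)" and det2: "(y (i + 2))\<^sup>2 \<le> x (i + 2) * x (i + 4)"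
    using psd_pmat_imp_block_psd[OF psd i2] unfolding add.assoc by simp_all
  have "0 < (y i)\<^sup>2" "0 < (y (i + 2))\<^sup>2"
    using y_pos by simp_all
  with det det2 have "0 < x i * x (i + 2)" "0 < x (i + 2) * x (i + 4)"
    by linarith+
  with \<open>0 \<le> x i\<close> \<open>0 \<le> x (i + 2)\<close> \<open>0 \<le> x (i + 4)\<close>
  have "0 < x i" "0 < x (i + 2)" "0 < x (i + 4)"
    by (auto simp: zero_less_mult_iff)
  then obtain r where "0 < r"
    and neg: "x i powr r + x (i + 2) powr r + x (i + 4) powr r < 2 * y i powr r + 2 * y (i + 2) powr r"
    using ex_powr_sum_three_lt_four y_pos by blast
  have "psd n (pmat (\<lambda>i. x i powr r) (\<lambda>i. y i powr r))"
    using id \<open>0 < r\<close> unfolding infinitely_divisible_def hadamard_pow_pmat by blast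
  then have "0 \<le> pmat_form n (\<lambda>i. x i powr r) (\<lambda>i. y i powr r)
      (\<lambda>k. if k = i then 1 else if k = i + 2 then -1 else if k = i + 4 then 1 else 0)"
    unfolding psd_pmat_iff ..
  then have "0 \<le> x i powr r + x (i + 2) powr r + x (i + 4) powr r - 2 * y i powr r - 2 * y (i + 2) powr r"
    unfolding pmat_form_three_point[OF \<open>1 \<le> i\<close> \<open>i + 4 \<le> n\<close>] .
  with neg show False by simp
qed

theorem corollary2p6:
  fixes n :: nat and x y :: "nat \<Rightarrow> real"
  assumes "n \<ge> 3"
    and "\<forall>i\<in>{1..n}. x i \<ge> 0"
    and "\<forall>i\<in>{1..n-2}. y i \<ge> 0"
  shows "(infinitely_divisible n (pmat x y) \<longleftrightarrow>
           psd n (pmat x y) \<and>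
           \<not> (\<exists>i. 1 \<le> i \<and> i + 2 \<le> n - 2 \<and> y i > 0 \<and> y (i + 2) > 0))
         \<and> ((n = 3 \<or> n = 4) \<longrightarrow> (infinitely_divisible n (pmat x y) \<longleftrightarrow> psd n (pmat x y)))"
proof -
  have "infinitely_divisible n (pmat x y) \<longleftrightarrow>
      psd n (pmat x y) \<and> \<not> (\<exists>i. 1 \<le> i \<and> i + 2 \<le> n - 2 \<and> y i > 0 \<and> y (i + 2) > 0)"
  proof
    assume "infinitely_divisible n (pmat x y)"
    then show "psd n (pmat x y) \<and> \<not> (\<exists>i. 1 \<le> i \<and> i + 2 \<le> n - 2 \<and> y i > 0 \<and> y (i + 2) > 0)"
      using infinitely_divisible_imp_psd no_adjacent_if_infinitely_divisible_pmat by blast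
  next
    assume "psd n (pmat x y) \<and> \<not> (\<exists>i. 1 \<le> i \<and> i + 2 \<le> n - 2 \<and> y i > 0 \<and> y (i + 2) > 0)"
    then show "infinitely_divisible n (pmat x y)"
      using infinitely_divisible_pmat_if_no_adjacent[OF assms(2,3)] by blast
  qed
  moreover have "\<not> (\<exists>i. 1 \<le> i \<and> i + 2 \<le> n - 2 \<and> y i > 0 \<and> y (i + 2) > 0)" if "n \<le> 4"
    using that by auto
  ultimately show ?thesis
    by auto
qed

end
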